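(* Let $a,b,d>0$, let $c_{-}$ be the unique negative zero of $Q(x)=4ax^3-b^2x^2-18abd\,x+27a^2d^2+4db^3$, let $c^{*}=-\sqrt{3bd}$, and suppose $c\in(c_{-},c^{*})$. Let $\phi(x)=\frac{ax^3+bx^2+cx+d}{x^3}$ ($x>0$) and $P(t)=t^4-at^3-bt^2-ct-d$, $t>0$. Let $c_b$ be the unique negative root of the quadratic polynomial $H(x)=108x^2+(108ab+27a^3)x-9a^2b^2-32b^3$. \begin{description} \item[(a)] If $c=c_b$ then $P'$ touches the horizontal axis (i.e. $P'(t^* )=P''(t^* )=0$) at $t^{*}=-\frac{6c_{b}+ab}{3a^2+8b}$, and $t^*>0$. \item[(b)] If $c_{b}\geq \frac{b^2-12d}{3a}$ then $\phi$ has a unique positive equilibrium for all $c\in(c_{-},c^{*})$. \item[(c)] If $c_{b}<\frac{b^2-12d}{3a}$ then, as the parameter $c$ increases from $c_b$ (with $a,b,d$ fixed), $P$ touches the horizontal axis first at a local minimum point $t_m$ of $P$ and next at a local maximum point $t_M$ of $P$, with $0<t_M<t_m$. Let $c_m$ and $c_M$ be the values of the parameter $c$ corresponding to $t_m$ and $t_M$ respectively. Then $$c_{b}<c_{m}<c_{M}<c^{*},\qquad c_{-}<c_{M}.$$ Moreover: \begin{description} \item[(c1)] If $c_{-}\leq c_{m}$: for $c\in(c_m,c_M)$, $\phi$ has three positive equilibria. For $c=c_m$, $\phi$ has two positive equilibria, one of which is $t_m$; the graph of $\phi$ is tangent to the line $y=x$ at $t_m$, and $t_m$ is greater than the other equilibrium.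 For $c=c_M$, $\phi$ has two positive equilibria, one of which is $t_M$; the graph of $\phi$ is tangent to the line $y=x$ at $t_M$, and $t_M$ is lower than the other equilibrium. For $c\in(c_{-},c_m)\cup(c_M,c^{*})$, $\phi$ has a unique positive equilibrium. \item[(c2)] If $c_m<c_{-}$: for $c\in(c_{-},c_M)$, $\phi$ has three positive equilibria. For $c=c_M$, $\phi$ has two positive equilibria, one of which is $t_M$; the graph of $\phi$ is tangent to the line $y=x$ at $t_M$, and $t_M$ is lower than the other equilibrium. For $c\in(c_M,c^{*})$, $\phi$ has a unique positive equilibrium. \end{description} \end{description}
   Context: $\phi$ is the right-hand side of the difference equation $x_{n+1}=\frac{ax_n^3+bx_n^2+cx_n+d}{x_n^3}$. An equilibrium of $\phi$ is a point $t>0$ with $\phi(t)=t$; these are exactly the positive roots of $P$. "$P$ touches the horizontal axis at $t_0$" means $t_0$ is a root of $P$ with $P'(t_0)=0$ (a double root). *)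

theory Defs
  imports "HOL-Analysis.Analysis" "HOL-Computational_Algebra.Polynomial"
begin

definition phi :: "real \<Rightarrow> real \<Rightarrow> real \<Rightarrow> real \<Rightarrow> real \<Rightarrow> real" where
  "phi a b c d x = (a*x^3 + b*x^2 + c*x + d) / x^3"

definition Pp :: "real \<Rightarrow> real \<Rightarrow> real \<Rightarrow> real \<Rightarrow> real poly" where
  "Pp a b c d = [:-d, -c, -b, -a, 1:]"

definition Qf :: "real \<Rightarrow> real \<Rightarrow> real \<Rightarrow> real \<Rightarrow> real" where
  "Qf a b d x = 4*a*x^3 - b^2*x^2 - 18*a*b*d*x + 27*a^2*d^2 + 4*d*b^3"

definition Hf :: "real \<Rightarrow> real \<Rightarrow> real \<Rightarrow> real" where
  "Hf a b x = 108*x^2 + (108*a*b + 27*a^3)*x - 9*a^2*b^2 - 32*b^3"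

definition equilibria :: "real \<Rightarrow> real \<Rightarrow> real \<Rightarrow> real \<Rightarrow> real set" where
  "equilibria a b c d = {t. 0 < t \<and> phi a b c d t = t}"

definition touches :: "real poly \<Rightarrow> real \<Rightarrow> bool" where
  "touches p t0 \<longleftrightarrow> poly p t0 = 0 \<and> poly (pderiv p) t0 = 0"

definition loc_min_pt :: "(real \<Rightarrow> real) \<Rightarrow> real \<Rightarrow> bool" where
  "loc_min_pt f x \<longleftrightarrow> (\<forall>\<^sub>F y in nhds x. f x \<le> f y)"

definition loc_max_pt :: "(real \<Rightarrow> real) \<Rightarrow> real \<Rightarrow> bool" where
  "loc_max_pt f x \<longleftrightarrow> (\<forall>\<^sub>F y in nhds x. f y \<le> f x)"

end

theory Submission
  imports Defs
begin

text \<open>For \<open>t > 0\<close> we have \<open>P(t) = t (G(t) - c)\<close> with \<open>G(t) = t\<^sup>3 - at\<^sup>2 - bt - d/t\<close>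
  (\<open>equilibrium_param\<close>), so the positive equilibria for the parameter \<open>c\<close> are the solutions of
  \<open>G(t) = c\<close>, and \<open>P\<close> touches the axis at \<open>t\<close> exactly when moreover \<open>G'(t) = 0\<close>. Now
  \<open>t\<^sup>2 G'(t) = R(t) = 3t\<^sup>4 - 2at\<^sup>3 - bt\<^sup>2 + d\<close> (\<open>tangency_poly\<close>) and \<open>R'(t) = t P''(t)\<close>, so \<open>R\<close>
  decreases up to the inflection point \<open>t\<^sub>2\<close> of \<open>P'\<close> and increases afterwards; moreover \<open>c\<^sub>b\<close> is
  the parameter with \<open>P'(t\<^sub>2) = 0\<close>, and \<open>12 R(t\<^sub>2) = 3ac\<^sub>b - b\<^sup>2 + 12d\<close>. If \<open>R(t\<^sub>2) \<ge> 0\<close>, then \<open>G\<close>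
  is strictly increasing and every level is attained once. Otherwise \<open>R\<close> has two positive zeros
  \<open>t\<^sub>M < t\<^sub>2 < t\<^sub>m\<close>, \<open>G\<close> increases, decreases and increases again, and the number of equilibria is
  read off from the position of \<open>c\<close> relative to the local extrema \<open>c\<^sub>M = G(t\<^sub>M)\<close> and
  \<open>c\<^sub>m = G(t\<^sub>m)\<close>.\<close>

definition equilibrium_param :: "real \<Rightarrow> real \<Rightarrow> real \<Rightarrow> real \<Rightarrow> real" where
  "equilibrium_param a b d t = t^3 - a*t^2 - b*t - d/t"

definition tangency_poly :: "real \<Rightarrow> real \<Rightarrow> real \<Rightarrow> real \<Rightarrow> real" where
  "tangency_poly a b d t = 3*t^4 - 2*a*t^3 - b*t^2 + d"

lemma poly_Pp: "poly (Pp a b c d) t = t^4 - a*t^3 - b*t^2 - c*t - d"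
  by (simp add: Pp_def algebra_simps power_def)

lemma poly_pderiv_Pp: "poly (pderiv (Pp a b c d)) t = 4*t^3 - 3*a*t^2 - 2*b*t - c"
  by (simp add: Pp_def pderiv_pCons algebra_simps power_def)

lemma poly_pderiv2_Pp: "poly (pderiv (pderiv (Pp a b c d))) t = 12*t^2 - 6*a*t - 2*b"
  by (simp add: Pp_def pderiv_pCons algebra_simps power_def)

lemma poly_Pp_equilibrium_param:
  "t > 0 \<Longrightarrow> poly (Pp a b c d) t = t * (equilibrium_param a b d t - c)"
  by (simp add: poly_Pp equilibrium_param_def field_simps power_def)

lemma poly_pderiv_Pp_equilibrium_param:
  "t > 0 \<Longrightarrow> poly (pderiv (Pp a b c d)) t = tangency_poly a b d t / t + equilibrium_param a b d t - c"
  by (simp add: poly_pderiv_Pp equilibrium_param_def tangency_poly_def field_simps power_def)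

lemma touches_Pp_iff:
  "t > 0 \<Longrightarrow> touches (Pp a b c d) t \<longleftrightarrow> equilibrium_param a b d t = c \<and> tangency_poly a b d t = 0"
  using poly_Pp_equilibrium_param[of t a b c d] poly_pderiv_Pp_equilibrium_param[of t a b c d]
  by (auto simp: touches_def)

lemma equilibria_eq: "equilibria a b c d = {t. t > 0 \<and> equilibrium_param a b d t = c}"
proof -
  have "phi a b c d t = t \<longleftrightarrow> equilibrium_param a b d t = c" if "t > 0" for t
  proof -
    have "phi a b c d t = t \<longleftrightarrow> poly (Pp a b c d) t = 0"
      using that by (simp add: phi_def poly_Pp field_simps power_def) argo
    also have "\<dots> \<longleftrightarrow> equilibrium_param a b d t = c"
      using poly_Pp_equilibrium_param[OF that] that by simp
    finally show ?thesis .
  qed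
  then show ?thesis unfolding equilibria_def by auto
qed

lemma tangent_phi_has_derivative_1:
  assumes t: "t > 0" and touch: "touches (Pp a b c d) t"
  shows "(phi a b c d has_real_derivative 1) (at t)"
proof -
  have num: "a*t^3 + b*t^2 + c*t + d = t^4" using touch by (simp add: touches_def poly_Pp)
  have num': "3*a*t^2 + 2*b*t + c = 4*t^3" using touch by (simp add: touches_def poly_pderiv_Pp)
  have "(phi a b c d has_real_derivative
      ((3*a*t^2 + 2*b*t + c)*t^3 - (a*t^3 + b*t^2 + c*t + d)*(3*t^2)) / (t^3*t^3)) (at t)"
    unfolding phi_def[abs_def] using t
    by (auto intro!: derivative_eq_intros simp: power2_eq_square)
  also have "((3*a*t^2 + 2*b*t + c)*t^3 - (a*t^3 + b*t^2 + c*t + d)*(3*t^2)) / (t^3*t^3) = 1"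
    unfolding num num' using t by (simp add: field_simps power_def)
  finally show ?thesis .
qed

lemma equilibrium_param_has_derivative:
  assumes "t > 0"
  shows "(equilibrium_param a b d has_real_derivative tangency_poly a b d t / t^2) (at t)"
proof -
  have "(equilibrium_param a b d has_real_derivative 3*t^2 - 2*a*t - b + d/t^2) (at t)"
    unfolding equilibrium_param_def[abs_def] using assms
    by (auto intro!: derivative_eq_intros simp: field_simps power_def)
  also have "3*t^2 - 2*a*t - b + d/t^2 = tangency_poly a b d t / t^2"
    using assms by (simp add: tangency_poly_def field_simps power_def)
  finally show ?thesis .
qed

lemma continuous_on_equilibrium_param: "0 < x \<Longrightarrow> continuous_on {x..y} (equilibrium_param a b d)"
  unfolding equilibrium_param_def by (auto intro!: continuous_intros)

lemma equilibrium_param_strict_mono: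
  assumes "0 < x" "x < y" "\<And>t. x < t \<Longrightarrow> t < y \<Longrightarrow> tangency_poly a b d t > 0"
  shows "equilibrium_param a b d x < equilibrium_param a b d y"
proof (rule DERIV_pos_imp_increasing_open[OF \<open>x < y\<close>])
  fix t assume "x < t" "t < y"
  with assms show "\<exists>z. (equilibrium_param a b d has_real_derivative z) (at t) \<and> z > 0"
    using equilibrium_param_has_derivative[of t a b d] by force
qed (use assms in \<open>auto intro!: continuous_on_equilibrium_param\<close>)

lemma equilibrium_param_strict_antimono:
  assumes "0 < x" "x < y" "\<And>t. x < t \<Longrightarrow> t < y \<Longrightarrow> tangency_poly a b d t < 0"
  shows "equilibrium_param a b d y < equilibrium_param a b d x"
proof (rule DERIV_neg_imp_decreasing_open[OF \<open>x < y\<close>])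
  fix t assume "x < t" "t < y"
  with assms show "\<exists>z. (equilibrium_param a b d has_real_derivative z) (at t) \<and> z < 0"
    using equilibrium_param_has_derivative[of t a b d] by (force simp: divide_neg_pos)
qed (use assms in \<open>auto intro!: continuous_on_equilibrium_param\<close>)

lemma tangency_poly_has_derivative:
  "(tangency_poly a b d has_real_derivative t * (12*t^2 - 6*a*t - 2*b)) (at t)"
  unfolding tangency_poly_def by (auto intro!: derivative_eq_intros simp: algebra_simps power_def)

lemma continuous_on_tangency_poly: "continuous_on S (tangency_poly a b d)"
  unfolding tangency_poly_def by (auto intro!: continuous_intros)

text \<open>\<open>12t\<^sup>2 - 6at - 2b = P''(t)\<close>; its positive root \<open>t\<^sub>2\<close> is the inflection point of \<open>P'\<close>.\<close>

lemma inflection_point_exists: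
  fixes a b :: real
  assumes "a > 0" "b > 0"
  obtains t2 where "t2 > 0" "12*t2^2 - 6*a*t2 - 2*b = 0"
proof -
  define s where "s = sqrt (36*a^2 + 96*b)"
  have "s \<ge> 0" and "s^2 = 36*a^2 + 96*b"
    using assms unfolding s_def by (simp_all add: add_nonneg_nonneg)
  then have "(6*a + s)/24 > 0" "12*((6*a + s)/24)^2 - 6*a*((6*a + s)/24) - 2*b = 0"
    using assms by (simp_all add: field_simps power2_eq_square)
  then show ?thesis by (rule that)
qed

lemma inflection_point_gt_half:
  fixes a b t2 :: real
  assumes "b > 0" "t2 > 0" "12*t2^2 - 6*a*t2 - 2*b = 0"
  shows "2*t2 > a"
proof -
  have "t2*(12*t2 - 6*a) = 2*b" using assms(3) by (simp add: algebra_simps power2_eq_square)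
  then have "0 < t2*(12*t2 - 6*a)" using assms(1) by simp
  then show ?thesis using assms(2) zero_less_mult_pos by fastforce
qed

lemma second_derivative_sign:
  fixes a b t t2 :: real
  assumes "b > 0" "t2 > 0" "12*t2^2 - 6*a*t2 - 2*b = 0" "t > 0"
  shows "t < t2 \<Longrightarrow> 12*t^2 - 6*a*t - 2*b < 0" and "t2 < t \<Longrightarrow> 12*t^2 - 6*a*t - 2*b > 0"
proof -
  have "12*t^2 - 6*a*t - 2*b = (t - t2)*(12*(t + t2) - 6*a)"
    using assms(3) by (simp add: algebra_simps power2_eq_square)
  moreover have "12*(t + t2) - 6*a > 0" using inflection_point_gt_half[OF assms(1-3)] assms(4) by simp
  ultimately show "t < t2 \<Longrightarrow> 12*t^2 - 6*a*t - 2*b < 0" "t2 < t \<Longrightarrow> 12*t^2 - 6*a*t - 2*b > 0"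
    by (simp_all add: mult_neg_pos)
qed

lemma tangency_poly_strict_antimono:
  assumes "b > 0" "t2 > 0" "12*t2^2 - 6*a*t2 - 2*b = 0" "0 \<le> x" "x < y" "y \<le> t2"
  shows "tangency_poly a b d y < tangency_poly a b d x"
proof (rule DERIV_neg_imp_decreasing_open[OF \<open>x < y\<close>])
  fix t assume "x < t" "t < y"
  with assms have "t * (12*t^2 - 6*a*t - 2*b) < 0"
    using second_derivative_sign(1)[OF assms(1-3), of t] by (simp add: mult_pos_neg)
  then show "\<exists>z. (tangency_poly a b d has_real_derivative z) (at t) \<and> z < 0"
    using tangency_poly_has_derivative by blast
qed (rule continuous_on_tangency_poly)

lemma tangency_poly_strict_mono:
  assumes "b > 0" "t2 > 0" "12*t2^2 - 6*a*t2 - 2*b = 0" "t2 \<le> x" "x < y"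
  shows "tangency_poly a b d x < tangency_poly a b d y"
proof (rule DERIV_pos_imp_increasing_open[OF \<open>x < y\<close>])
  fix t assume "x < t" "t < y"
  with assms have "t * (12*t^2 - 6*a*t - 2*b) > 0"
    using second_derivative_sign(2)[OF assms(1-3), of t] by simp
  then show "\<exists>z. (tangency_poly a b d has_real_derivative z) (at t) \<and> z > 0"
    using tangency_poly_has_derivative by blast
qed (rule continuous_on_tangency_poly)

lemma tangency_poly_pos_large:
  assumes "a > 0" "b > 0" "d > 0" "t \<ge> a + b + 1"
  shows "tangency_poly a b d t > 0"
proof -
  have "t*(3*t - 2*a) \<ge> 1*(3*t - 2*a)" using assms by (intro mult_right_mono) auto
  then have "3*t^2 - 2*a*t - b > 0" using assms by (simp add: algebra_simps power2_eq_square)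
  then have "t^2 * (3*t^2 - 2*a*t - b) > 0" using assms by simp
  then show ?thesis using assms unfolding tangency_poly_def by (simp add: algebra_simps power_def)
qed

lemma tangency_poly_two_zeros:
  assumes "a > 0" "b > 0" "d > 0" "t2 > 0" "12*t2^2 - 6*a*t2 - 2*b = 0"
    and neg: "tangency_poly a b d t2 < 0"
  obtains tM tm where "0 < tM" "tM < t2" "t2 < tm"
    "tangency_poly a b d tM = 0" "tangency_poly a b d tm = 0"
    "\<And>t. 0 < t \<Longrightarrow> t < tM \<Longrightarrow> tangency_poly a b d t > 0"
    "\<And>t. tM < t \<Longrightarrow> t < tm \<Longrightarrow> tangency_poly a b d t < 0"
    "\<And>t. tm < t \<Longrightarrow> tangency_poly a b d t > 0"
proof -
  let ?R = "tangency_poly a b d"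
  have R0: "?R 0 = d" unfolding tangency_poly_def by simp
  obtain tM where tM: "0 \<le> tM" "tM \<le> t2" "?R tM = 0"
    using IVT2'[of ?R t2 0 0] neg R0 assms continuous_on_tangency_poly by force
  with R0 neg assms(3) have tM': "0 < tM" "tM < t2" by (auto simp: order_le_less)
  define B where "B = t2 + a + b + 1"
  have "?R B > 0" using tangency_poly_pos_large[of a b d B] assms unfolding B_def by auto
  then obtain tm where tm: "t2 \<le> tm" "?R tm = 0"
    using IVT'[of ?R t2 0 B] neg continuous_on_tangency_poly assms unfolding B_def by force
  with neg have tm': "t2 < tm" by (auto simp: order_le_less)
  note dec = tangency_poly_strict_antimono[OF assms(2,4,5)]
  note inc = tangency_poly_strict_mono[OF assms(2,4,5)]
  show ?thesis
  proof (rule that[OF tM' tm' tM(3) tm(2)])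
    show "?R t > 0" if "0 < t" "t < tM" for t using dec[of t tM d] that tM tM' by auto
    show "?R t < 0" if "tM < t" "t < tm" for t
      using dec[of tM t d] inc[of t tm d] that tM tm by (cases "t \<le> t2") auto
    show "?R t > 0" if "tm < t" for t using inc[of tm t d] that tm tm' by auto
  qed
qed

lemma poly_Pp_pos_large:
  fixes a b c d t :: real
  assumes "a > 0" "b > 0" "d > 0" "t \<ge> a + b + \<bar>c\<bar> + d + 1"
  shows "poly (Pp a b c d) t > 0"
proof -
  have t1: "t \<ge> 1" using assms by auto
  have "t^3 * (t - a - b - \<bar>c\<bar> - d) > 0" using assms by (intro mult_pos_pos) auto
  moreover have "b*t^2 \<le> b*t^3" using t1 assms by (intro mult_left_mono) (auto simp: power_increasing)
  moreover have "c*t \<le> \<bar>c\<bar>*t^3"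
  proof -
    have "c*t \<le> \<bar>c\<bar>*t" using t1 by (intro mult_right_mono) auto
    also have "\<dots> \<le> \<bar>c\<bar>*t^3" using t1 power_increasing[of 1 3 t] by (intro mult_left_mono) auto
    finally show ?thesis .
  qed
  moreover have "d \<le> d*t^3" using t1 assms by (simp add: one_le_power)
  ultimately show ?thesis unfolding poly_Pp by (simp add: algebra_simps power_def)
qed

lemma equilibrium_between:
  fixes a b c d x y :: real
  assumes "0 \<le> x" "x < y" "poly (Pp a b c d) x * poly (Pp a b c d) y < 0"
  obtains r where "x < r" "r < y" "equilibrium_param a b d r = c"
proof -
  obtain r where r: "x < r" "r < y" "poly (Pp a b c d) r = 0"
    using assms poly_IVT[OF \<open>x < y\<close>] by blast
  with assms(1) have "r > 0" by simp
  with r show ?thesis using poly_Pp_equilibrium_param[of r a b c d] that by simp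
qed

lemma equilibrium_beyond:
  fixes a b c d x :: real
  assumes "a > 0" "b > 0" "d > 0" "x \<ge> 0" "poly (Pp a b c d) x < 0"
  obtains r where "x < r" "equilibrium_param a b d r = c"
proof -
  define y where "y = a + b + \<bar>c\<bar> + d + 1 + x"
  have "poly (Pp a b c d) y > 0" using poly_Pp_pos_large[of a b d c y] assms unfolding y_def by auto
  with assms have "poly (Pp a b c d) x * poly (Pp a b c d) y < 0" by (simp add: mult_neg_pos)
  moreover have "x < y" using assms unfolding y_def by simp
  ultimately show ?thesis using equilibrium_between[of x y a b c d] assms that by blast
qed

lemma card_equilibria_eq_1:
  fixes a b c d :: real
  assumes "a > 0" "b > 0" "d > 0"
    and mono: "\<And>x y. 0 < x \<Longrightarrow> x < y \<Longrightarrow> equilibrium_param a b d x < equilibrium_param a b d y"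
  shows "card (equilibria a b c d) = 1"
proof -
  have "poly (Pp a b c d) 0 < 0" using assms by (simp add: poly_Pp)
  then obtain r where r: "0 < r" "equilibrium_param a b d r = c"
    using equilibrium_beyond[of a b d 0 c] assms by auto
  have "t = r" if "t > 0" "equilibrium_param a b d t = c" for t
    using mono[of t r] mono[of r t] that r by (cases t r rule: linorder_cases) auto
  then have "equilibria a b c d = {r}" unfolding equilibria_eq using r by blast
  then show ?thesis by simp
qed

lemma Qf_negative_root_unique:
  fixes a b d x y :: real
  assumes "a > 0" "b > 0" "d > 0" "x < 0" "y < 0" "Qf a b d x = 0" "Qf a b d y = 0"
  shows "x = y"
proof -
  have "\<not> u < v" if "u < 0" "v < 0" "Qf a b d u = 0" "Qf a b d v = 0" for u v
  proof
    assume "u < v"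
    have "u * Qf a b d v - v * Qf a b d u
        = (u - v)*(27*a^2*d^2 + 4*d*b^3) + u * v * (v - u)*(4*a*(u + v) - b^2)"
      unfolding Qf_def by algebra
    moreover have "(u - v)*(27*a^2*d^2 + 4*d*b^3) < 0"
      using \<open>u < v\<close> assms by (intro mult_neg_pos add_pos_pos) auto
    moreover have "u * v * (v - u)*(4*a*(u + v) - b^2) < 0"
    proof -
      have "4*a*(u + v) < 0" using assms that by (simp add: mult_pos_neg)
      then have "4*a*(u + v) - b^2 < 0" using assms by (smt (verit) zero_le_power2)
      moreover have "u * v * (v - u) > 0" using that \<open>u < v\<close> by (simp add: mult_neg_neg)
      ultimately show ?thesis by (simp add: mult_pos_neg)
    qed
    ultimately show False using that by simp
  qed
  then show ?thesis using assms by (meson linorder_neqE)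
qed

lemma Hf_negative_root_unique:
  fixes a b x y :: real
  assumes "a > 0" "b > 0" "x < 0" "y < 0" "Hf a b x = 0" "Hf a b y = 0"
  shows "x = y"
proof (rule ccontr)
  assume "x \<noteq> y"
  have "(x - y) * (108*(x + y) + 108*a*b + 27*a^3) = Hf a b x - Hf a b y"
    unfolding Hf_def by algebra
  with assms \<open>x \<noteq> y\<close> have sum: "108*(x + y) + 108*a*b + 27*a^3 = 0" by simp
  have "Hf a b x = x*(108*(x + y) + 108*a*b + 27*a^3) - 108*x*y - 9*a^2*b^2 - 32*b^3"
    unfolding Hf_def by algebra
  with assms sum have "108*x*y = - 9*a^2*b^2 - 32*b^3" by simp
  moreover have "x*y > 0" using assms by (simp add: mult_neg_neg)
  moreover have "9*a^2*b^2 + 32*b^3 > 0" using assms by (intro add_pos_pos) auto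
  ultimately show False by linarith
qed

locale two_tangencies =
  fixes a b d tM tm :: real
  assumes a: "a > 0" and b: "b > 0" and d: "d > 0" and tM: "0 < tM" and tM_tm: "tM < tm"
    and zero_tM: "tangency_poly a b d tM = 0" and zero_tm: "tangency_poly a b d tm = 0"
    and pos_left: "\<And>t. 0 < t \<Longrightarrow> t < tM \<Longrightarrow> tangency_poly a b d t > 0"
    and neg_between: "\<And>t. tM < t \<Longrightarrow> t < tm \<Longrightarrow> tangency_poly a b d t < 0"
    and pos_right: "\<And>t. tm < t \<Longrightarrow> tangency_poly a b d t > 0"
begin

abbreviation "g \<equiv> equilibrium_param a b d"
abbreviation "cM \<equiv> equilibrium_param a b d tM"
abbreviation "cm \<equiv> equilibrium_param a b d tm"

lemma tm: "0 < tm" using tM tM_tm by simp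

lemma increasing_left: "0 < x \<Longrightarrow> x < y \<Longrightarrow> y \<le> tM \<Longrightarrow> g x < g y"
  by (rule equilibrium_param_strict_mono) (auto intro!: pos_left)

lemma decreasing_between: "tM \<le> x \<Longrightarrow> x < y \<Longrightarrow> y \<le> tm \<Longrightarrow> g y < g x"
  using tM by (intro equilibrium_param_strict_antimono) (auto intro!: neg_between)

lemma increasing_right: "tm \<le> x \<Longrightarrow> x < y \<Longrightarrow> g x < g y"
  using tm by (intro equilibrium_param_strict_mono) (auto intro!: pos_right)

lemma cm_less_cM: "cm < cM"
  using decreasing_between[of tM tm] tM_tm by simp

lemma inj_left: "0 < x \<Longrightarrow> x \<le> tM \<Longrightarrow> 0 < y \<Longrightarrow> y \<le> tM \<Longrightarrow> g x = g y \<Longrightarrow> x = y"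
  using increasing_left[of x y] increasing_left[of y x] by (cases x y rule: linorder_cases) auto

lemma inj_between: "tM \<le> x \<Longrightarrow> x \<le> tm \<Longrightarrow> tM \<le> y \<Longrightarrow> y \<le> tm \<Longrightarrow> g x = g y \<Longrightarrow> x = y"
  using decreasing_between[of x y] decreasing_between[of y x] by (cases x y rule: linorder_cases) auto

lemma inj_right: "tm \<le> x \<Longrightarrow> tm \<le> y \<Longrightarrow> g x = g y \<Longrightarrow> x = y"
  using increasing_right[of x y] increasing_right[of y x] by (cases x y rule: linorder_cases) auto

lemma equilibrium_param_classify:
  assumes "0 < t" "g t = c"
  shows "t < tM \<and> c < cM \<or> t = tM \<and> c = cM \<or> tM < t \<and> t < tm \<and> cm < c \<and> c < cM
    \<or> t = tm \<and> c = cm \<or> tm < t \<and> cm < c"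
  using assms increasing_left[of t tM] decreasing_between[of tM t] decreasing_between[of t tm]
    increasing_right[of tm t] tM_tm
  by (cases t tM rule: linorder_cases; cases t tm rule: linorder_cases) auto

lemma equilibrium_left:
  assumes "c < cM" obtains r where "0 < r" "r < tM" "g r = c"
proof -
  have "poly (Pp a b c d) 0 * poly (Pp a b c d) tM < 0"
    using assms tM d poly_Pp_equilibrium_param[of tM a b c d] by (simp add: poly_Pp mult_neg_pos)
  then show ?thesis using equilibrium_between[of 0 tM a b c d] tM that by auto
qed

lemma equilibrium_between_tangencies:
  assumes "cm < c" "c < cM" obtains r where "tM < r" "r < tm" "g r = c"
proof -
  have "poly (Pp a b c d) tM > 0" "poly (Pp a b c d) tm < 0"
    using assms tM tm poly_Pp_equilibrium_param[of tM a b c d] poly_Pp_equilibrium_param[of tm a b c d]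
    by (simp_all add: mult_pos_neg)
  then have "poly (Pp a b c d) tM * poly (Pp a b c d) tm < 0" by (simp add: mult_pos_neg)
  then show ?thesis using equilibrium_between[of tM tm a b c d] tM tM_tm that by auto
qed

lemma equilibrium_right:
  assumes "cm < c" obtains r where "tm < r" "g r = c"
proof -
  have "poly (Pp a b c d) tm < 0"
    using assms tm poly_Pp_equilibrium_param[of tm a b c d] by (simp add: mult_pos_neg)
  then show ?thesis using equilibrium_beyond[of a b d tm c] a b d tm that by auto
qed

lemma card_equilibria_3:
  assumes "cm < c" "c < cM" shows "card (equilibria a b c d) = 3"
proof -
  obtain r1 where r1: "0 < r1" "r1 < tM" "g r1 = c" using equilibrium_left assms by blast
  obtain r2 where r2: "tM < r2" "r2 < tm" "g r2 = c"
    using equilibrium_between_tangencies assms by blast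
  obtain r3 where r3: "tm < r3" "g r3 = c" using equilibrium_right assms by blast
  have "equilibria a b c d = {r1, r2, r3}"
  proof (intro equalityI subsetI)
    fix t assume "t \<in> equilibria a b c d"
    then have t: "0 < t" "g t = c" unfolding equilibria_eq by auto
    with equilibrium_param_classify[OF t] assms consider "t < tM" | "tM < t" "t < tm" | "tm < t"
      by auto
    then show "t \<in> {r1, r2, r3}"
      by cases (use inj_left[of t r1] inj_between[of t r2] inj_right[of t r3] t r1 r2 r3 in auto)
  qed (use r1 r2 r3 tM in \<open>auto simp: equilibria_eq\<close>)
  moreover have "r1 \<noteq> r2" "r1 \<noteq> r3" "r2 \<noteq> r3" using r1 r2 r3 by auto
  ultimately show ?thesis by simp
qed

lemma card_equilibria_1_below:
  assumes "c < cm" shows "card (equilibria a b c d) = 1"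
proof -
  have "c < cM" using assms cm_less_cM by simp
  then obtain r where r: "0 < r" "r < tM" "g r = c" using equilibrium_left by blast
  have "equilibria a b c d = {r}"
  proof (intro equalityI subsetI)
    fix t assume "t \<in> equilibria a b c d"
    then have t: "0 < t" "g t = c" unfolding equilibria_eq by auto
    with equilibrium_param_classify[OF t] assms \<open>c < cM\<close> have "t < tM" by auto
    then show "t \<in> {r}" using inj_left[of t r] t r by auto
  qed (use r in \<open>auto simp: equilibria_eq\<close>)
  then show ?thesis by simp
qed

lemma card_equilibria_1_above:
  assumes "cM < c" shows "card (equilibria a b c d) = 1"
proof -
  have "cm < c" using assms cm_less_cM by simp
  then obtain r where r: "tm < r" "g r = c" using equilibrium_right by blast
  have "equilibria a b c d = {r}"
  proof (intro equalityI subsetI)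
    fix t assume "t \<in> equilibria a b c d"
    then have t: "0 < t" "g t = c" unfolding equilibria_eq by auto
    with equilibrium_param_classify[OF t] assms \<open>cm < c\<close> have "tm < t" by auto
    then show "t \<in> {r}" using inj_right[of t r] t r by auto
  qed (use r tm in \<open>auto simp: equilibria_eq\<close>)
  then show ?thesis by simp
qed

lemma equilibria_at_cm:
  "card (equilibria a b cm d) = 2 \<and> tm \<in> equilibria a b cm d \<and>
   (\<forall>t\<in>equilibria a b cm d. t \<noteq> tm \<longrightarrow> t < tm)"
proof -
  obtain r where r: "0 < r" "r < tM" "g r = cm" using equilibrium_left cm_less_cM by blast
  have "equilibria a b cm d = {r, tm}"
  proof (intro equalityI subsetI)
    fix t assume "t \<in> equilibria a b cm d"
    then have t: "0 < t" "g t = cm" unfolding equilibria_eq by auto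
    with equilibrium_param_classify[OF t] cm_less_cM have "t < tM \<or> t = tm" by auto
    then show "t \<in> {r, tm}" using inj_left[of t r] t r by auto
  qed (use r tm in \<open>auto simp: equilibria_eq\<close>)
  moreover have "r \<noteq> tm" using r tM_tm by simp
  ultimately show ?thesis using r tM_tm by auto
qed

lemma equilibria_at_cM:
  "card (equilibria a b cM d) = 2 \<and> tM \<in> equilibria a b cM d \<and>
   (\<forall>t\<in>equilibria a b cM d. t \<noteq> tM \<longrightarrow> tM < t)"
proof -
  obtain r where r: "tm < r" "g r = cM" using equilibrium_right cm_less_cM by blast
  have "equilibria a b cM d = {tM, r}"
  proof (intro equalityI subsetI)
    fix t assume "t \<in> equilibria a b cM d"
    then have t: "0 < t" "g t = cM" unfolding equilibria_eq by auto
    with equilibrium_param_classify[OF t] cm_less_cM have "t = tM \<or> tm < t" by auto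
    then show "t \<in> {tM, r}" using inj_right[of t r] t r by auto
  qed (use r tM tm in \<open>auto simp: equilibria_eq\<close>)
  moreover have "r \<noteq> tM" using r tM_tm by simp
  ultimately show ?thesis using r tM_tm by auto
qed

lemma touches_at_cm: "touches (Pp a b cm d) tm"
  using touches_Pp_iff[of tm a b cm d] tm zero_tm by simp

lemma touches_at_cM: "touches (Pp a b cM d) tM"
  using touches_Pp_iff[of tM a b cM d] tM zero_tM by simp

lemma touches_only_at_tangencies:
  assumes "0 < t" "touches (Pp a b c d) t" shows "t = tM \<and> c = cM \<or> t = tm \<and> c = cm"
  using assms touches_Pp_iff[of t a b c d] pos_left[of t] neg_between[of t] pos_right[of t]
  by (cases t tM rule: linorder_cases; cases t tm rule: linorder_cases) auto

lemma loc_min_at_cm: "loc_min_pt (poly (Pp a b cm d)) tm"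
  unfolding loc_min_pt_def eventually_nhds
proof (intro exI[of _ "{tM<..}"] conjI ballI)
  fix y assume y: "y \<in> {tM<..}"
  then have "cm \<le> g y"
    using decreasing_between[of y tm] increasing_right[of tm y] by (cases y tm rule: linorder_cases) auto
  then show "poly (Pp a b cm d) tm \<le> poly (Pp a b cm d) y"
    using touches_at_cm poly_Pp_equilibrium_param[of y a b cm d] y tM by (simp add: touches_def)
qed (use tM_tm in auto)

lemma loc_max_at_cM: "loc_max_pt (poly (Pp a b cM d)) tM"
  unfolding loc_max_pt_def eventually_nhds
proof (intro exI[of _ "{0<..<tm}"] conjI ballI)
  fix y assume y: "y \<in> {0<..<tm}"
  then have "g y \<le> cM"
    using increasing_left[of y tM] decreasing_between[of tM y] by (cases y tM rule: linorder_cases) auto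
  then show "poly (Pp a b cM d) y \<le> poly (Pp a b cM d) tM"
    using touches_at_cM poly_Pp_equilibrium_param[of y a b cM d] y
    by (simp add: touches_def mult_nonneg_nonpos)
qed (use tM tM_tm in auto)

end

lemma equilibrium_param_at_tangency:
  assumes "t > 0" "tangency_poly a b d t = 0"
  shows "equilibrium_param a b d t = 4*t^3 - 3*a*t^2 - 2*b*t"
    and "3*t*equilibrium_param a b d t = -(a*t^3 + 2*b*t^2 + 4*d)"
proof -
  have tG: "t * equilibrium_param a b d t = t^4 - a*t^3 - b*t^2 - d"
    using assms(1) unfolding equilibrium_param_def by (simp add: field_simps power_def)
  have d: "d = 2*a*t^3 + b*t^2 - 3*t^4" using assms(2) unfolding tangency_poly_def by simp
  have "t * equilibrium_param a b d t = t * (4*t^3 - 3*a*t^2 - 2*b*t)" using tG d by algebra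
  then show "equilibrium_param a b d t = 4*t^3 - 3*a*t^2 - 2*b*t" using assms(1) by simp
  show "3*t*equilibrium_param a b d t = -(a*t^3 + 2*b*t^2 + 4*d)" using tG d by algebra
qed

text \<open>\<open>c = 4t\<^sup>3 - 3at\<^sup>2 - 2bt\<close> is the parameter for which \<open>P'(t) = 0\<close>; over \<open>t > 0\<close> it is minimal at the
  inflection point \<open>t\<^sub>2\<close>, with minimum \<open>c\<^sub>b\<close>.\<close>

lemma inflection_value_less:
  fixes a b t t2 :: real
  assumes "b > 0" "t2 > 0" "12*t2^2 - 6*a*t2 - 2*b = 0" "t2 < t"
  shows "4*t2^3 - 3*a*t2^2 - 2*b*t2 < 4*t^3 - 3*a*t^2 - 2*b*t"
proof -
  have "4*t^3 - 3*a*t^2 - 2*b*t - (4*t2^3 - 3*a*t2^2 - 2*b*t2) = (t - t2)^2 * (4*t + 8*t2 - 3*a)"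
    using assms(3) by algebra
  moreover have "(t - t2)^2 * (4*t + 8*t2 - 3*a) > 0"
    using assms inflection_point_gt_half[OF assms(1-3)] by (intro mult_pos_pos) auto
  ultimately show ?thesis by linarith
qed

lemma inflection_value_eq_cb:
  fixes a b cb t2 :: real
  assumes "a > 0" "b > 0" "cb < 0" "Hf a b cb = 0" "t2 > 0" "12*t2^2 - 6*a*t2 - 2*b = 0"
  shows "cb = 4*t2^3 - 3*a*t2^2 - 2*b*t2"
proof (rule Hf_negative_root_unique[OF assms(1-3)])
  have "4*t2^3 - 3*a*t2^2 - 2*b*t2 = -(a*t2^2) - 4/3*(b*t2)" using assms(6) by algebra
  moreover have "a*t2^2 > 0" "b*t2 > 0" using assms by auto
  ultimately show "4*t2^3 - 3*a*t2^2 - 2*b*t2 < 0" by linarith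
  show "Hf a b (4*t2^3 - 3*a*t2^2 - 2*b*t2) = 0" using assms(6) unfolding Hf_def by algebra
qed (fact assms(4))

lemma tangency_value_less_neg_sqrt:
  assumes "a > 0" "b > 0" "d > 0" "t > 0" "tangency_poly a b d t = 0"
  shows "equilibrium_param a b d t < - sqrt (3*b*d)"
proof -
  define X where "X = - equilibrium_param a b d t"
  have "3*t*X = a*t^3 + 2*b*t^2 + 4*d"
    unfolding X_def using equilibrium_param_at_tangency(2)[OF assms(4,5)] by simp
  moreover have "a*t^3 > 0" using assms by simp
  ultimately have ge: "3*t*X \<ge> 2*b*t^2 + 4*d" by linarith
  have pos: "2*b*t^2 + 4*d > 0" using assms by (intro add_pos_pos) auto
  \<comment> \<open>AM-GM: \<open>(2bt\<^sup>2 + 4d)\<^sup>2 \<ge> 32bdt\<^sup>2 > 27bdt\<^sup>2\<close>\<close>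
  have "9*t^2*X^2 \<ge> (2*b*t^2 + 4*d)^2"
    using power_mono[OF ge, of 2] pos by (simp add: power_mult_distrib)
  moreover have "(2*b*t^2 + 4*d)^2 = 32*b*d*t^2 + (2*b*t^2 - 4*d)^2"
    by (simp add: algebra_simps power2_eq_square)
  moreover have "(2*b*t^2 - 4*d)^2 \<ge> 0" by simp
  ultimately have "9*t^2*X^2 \<ge> 32*b*d*t^2" by linarith
  moreover have "b*d*t^2 > 0" using assms by simp
  ultimately have "27*(b*d*t^2) < 9*(t^2*X^2)" by linarith
  then have "t^2 * (3*b*d) < t^2 * X^2" by (simp add: algebra_simps)
  then have "sqrt (3*b*d) < sqrt (X^2)" using assms by (intro real_sqrt_less_mono) simp
  moreover have "X > 0" using ge pos assms by (smt (verit) zero_less_mult_iff)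
  ultimately show ?thesis unfolding X_def by simp
qed

lemma Qf_negative_root_param:
  fixes a b d cminus :: real
  assumes "a > 0" "b > 0" "d > 0" "cminus < 0" "Qf a b d cminus = 0"
  obtains x0 where "x0 > 0" "d = 2*a*x0^3 + b*x0^2" "cminus = -3*a*x0^2 - 2*b*x0"
proof -
  define f where "f x = 2*a*x^3 + b*x^2 - d" for x
  define B where "B = 1 + d/b"
  have B: "B \<ge> 1" "b*B = b + d" unfolding B_def using assms by (simp_all add: field_simps)
  moreover have "b*B^2 \<ge> b*B"
    using B(1) assms mult_left_mono[of B "B*B" b] by (simp add: power2_eq_square)
  moreover have "2*a*B^3 \<ge> 0" using assms B by simp
  ultimately have "f B \<ge> 0" unfolding f_def using assms by linarith
  moreover have "continuous_on {0..B} f" unfolding f_def by (auto intro!: continuous_intros)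
  ultimately obtain x0 where x0: "0 \<le> x0" "f x0 = 0"
    using IVT'[of f 0 0 B] B assms unfolding f_def by force
  with assms have "x0 > 0" unfolding f_def by (auto simp: order_le_less)
  moreover have d: "d = 2*a*x0^3 + b*x0^2" using x0 unfolding f_def by simp
  moreover have "cminus = -3*a*x0^2 - 2*b*x0"
  proof (rule Qf_negative_root_unique[OF assms(1-4) _ assms(5)])
    have "a*x0^2 > 0" "b*x0 > 0" using assms \<open>x0 > 0\<close> by auto
    then show "-3*a*x0^2 - 2*b*x0 < 0" by linarith
    show "Qf a b d (-3*a*x0^2 - 2*b*x0) = 0" unfolding Qf_def d by algebra
  qed
  ultimately show ?thesis by (rule that)
qed

text \<open>With \<open>x\<^sub>0\<close> as in \<open>Qf_negative_root_param\<close> and \<open>T\<close> a zero of \<open>R\<close>, this expression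
  equals \<open>x\<^sub>0 (G(T) - c\<^sub>-)\<close>.\<close>

lemma left_tangency_gap_pos:
  fixes x T a b :: real
  assumes x: "x > 0" and T: "T > 0" and a: "a > 0" and b: "b > 0" and q: "6*T^2 < 3*a*T + b"
  shows "(x - T)^2*(a*(x + 2*T) + b) + T^3*(4*x - 3*T) > 0"
proof (cases "x \<ge> T")
  case True
  have "(x - T)^2*(a*(x + 2*T) + b) \<ge> 0" using x T a b by (intro mult_nonneg_nonneg) auto
  moreover have "T^3*(4*x - 3*T) > 0" using True T by (intro mult_pos_pos) auto
  ultimately show ?thesis by linarith
next
  case False
  show ?thesis
  proof (cases "a \<le> 3*T")
    case True
    have "(3*T - a)*(T - x) \<ge> 0" using True False by (intro mult_nonneg_nonneg) auto
    with q have "a*(x + 2*T) + b \<ge> 3*T*(x + T)" by (simp add: algebra_simps power2_eq_square)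
    then have "(x - T)^2*(a*(x + 2*T) + b) \<ge> (x - T)^2*(3*T*(x + T))" by (simp add: mult_left_mono)
    moreover have "(x - T)^2*(3*T*(x + T)) + T^3*(4*x - 3*T) = T*x*(3*(x - T/2)^2 + T^2/4)"
      by (simp add: algebra_simps power2_eq_square power3_eq_cube)
    moreover have "T*x*(3*(x - T/2)^2 + T^2/4) > 0"
      using x T by (intro mult_pos_pos add_nonneg_pos) auto
    ultimately show ?thesis by linarith
  next
    case False
    then have "a*(x + 2*T) \<ge> 3*T*(x + 2*T)" using x T by (intro mult_right_mono) auto
    then have "a*(x + 2*T) + b \<ge> 3*T*(x + 2*T)" using b by linarith
    then have "(x - T)^2*(a*(x + 2*T) + b) \<ge> (x - T)^2*(3*T*(x + 2*T))" by (simp add: mult_left_mono)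
    moreover have "(x - T)^2*(3*T*(x + 2*T)) + T^3*(4*x - 3*T)
        = T*(3*(4*x - 3*T)^2*(2*x + 3*T) + 2*x*T^2 + 15*T^3) / 32"
      by (simp add: algebra_simps power2_eq_square power3_eq_cube)
    moreover have "T*(3*(4*x - 3*T)^2*(2*x + 3*T) + 2*x*T^2 + 15*T^3) > 0"
      using x T by (intro mult_pos_pos add_nonneg_pos add_pos_pos mult_nonneg_nonneg) auto
    ultimately show ?thesis by linarith
  qed
qed

lemma cminus_less_left_tangency_value:
  fixes a b d cminus T :: real
  assumes "a > 0" "b > 0" "d > 0" "cminus < 0" "Qf a b d cminus = 0"
    and T: "T > 0" "tangency_poly a b d T = 0" "6*T^2 < 3*a*T + b"
  shows "cminus < equilibrium_param a b d T"
proof -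
  obtain x0 where x0: "x0 > 0" "d = 2*a*x0^3 + b*x0^2" "cminus = -3*a*x0^2 - 2*b*x0"
    using Qf_negative_root_param[OF assms(1-5)] .
  have dT: "d = -3*T^4 + 2*a*T^3 + b*T^2" using T(2) unfolding tangency_poly_def by simp
  have "3*T*((x0 - T)^2*(a*(x0 + 2*T) + b) + T^3*(4*x0 - 3*T))
      = 3*T*(a*x0^3 + b*x0^2 + d) - x0*(a*T^3 + 2*b*T^2 + 4*d)"
    using dT by algebra
  also have "\<dots> = 3*T*x0*(equilibrium_param a b d T - cminus)"
    using equilibrium_param_at_tangency(2)[OF T(1,2)] x0(2,3) by algebra
  finally have "3*T*x0*(equilibrium_param a b d T - cminus) > 0"
    using left_tangency_gap_pos[OF x0(1) T(1) assms(1,2) T(3)] T(1) by (metis mult_pos_pos zero_less_numeral)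
  then show ?thesis using mult_pos_pos[OF T(1) x0(1)] by (simp add: zero_less_mult_iff)
qed

lemma tangency_poly_at_inflection_nonneg_iff:
  fixes a b d cb t2 :: real
  assumes "a > 0" "12*t2^2 - 6*a*t2 - 2*b = 0" "cb = 4*t2^3 - 3*a*t2^2 - 2*b*t2"
  shows "tangency_poly a b d t2 \<ge> 0 \<longleftrightarrow> cb \<ge> (b^2 - 12*d) / (3*a)"
proof -
  have "12 * tangency_poly a b d t2 = 3*a*cb - b^2 + 12*d"
    using assms(2,3) unfolding tangency_poly_def by algebra
  moreover have "cb \<ge> (b^2 - 12*d) / (3*a) \<longleftrightarrow> 3*a*cb \<ge> b^2 - 12*d"
    using assms(1) by (simp add: divide_le_eq mult.commute)
  ultimately show ?thesis by linarith
qed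

lemma equilibrium_param_strict_mono_if_tangency_nonneg:
  fixes a b d t2 :: real
  assumes "b > 0" "t2 > 0" "12*t2^2 - 6*a*t2 - 2*b = 0" "tangency_poly a b d t2 \<ge> 0"
    and "0 < x" "x < y"
  shows "equilibrium_param a b d x < equilibrium_param a b d y"
proof -
  have pos: "tangency_poly a b d t > 0" if "t > 0" "t \<noteq> t2" for t
    using tangency_poly_strict_antimono[OF assms(1-3), of t t2 d]
      tangency_poly_strict_mono[OF assms(1-3), of t2 t d] that assms(4)
    by (cases "t < t2") auto
  have mono: "equilibrium_param a b d u < equilibrium_param a b d v"
    if "0 < u" "u < v" "t2 \<notin> {u<..<v}" for u v
    using that by (intro equilibrium_param_strict_mono) (auto intro!: pos)
  show ?thesis
  proof (cases "t2 \<in> {x<..<y}")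
    case True
    then show ?thesis using mono[of x t2] mono[of t2 y] assms by auto
  next
    case False
    then show ?thesis using mono assms by simp
  qed
qed

lemma theorem2_a:
  fixes a b d cminus cb :: real
  assumes "a > 0" "b > 0" "cb < 0" "Hf a b cb = 0"
  shows "\<forall>c. cminus < c \<and> c < - sqrt (3*b*d) \<and> c = cb \<longrightarrow>
    (let ts = - (6*cb + a*b) / (3*a^2 + 8*b) in
      poly (pderiv (Pp a b c d)) ts = 0 \<and> poly (pderiv (pderiv (Pp a b c d))) ts = 0 \<and> ts > 0)"
proof -
  obtain t2 where t2: "t2 > 0" "12*t2^2 - 6*a*t2 - 2*b = 0"
    using inflection_point_exists assms by blast
  have cb: "cb = 4*t2^3 - 3*a*t2^2 - 2*b*t2" by (rule inflection_value_eq_cb[OF assms t2])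
  have "- (6*cb + a*b) = t2*(3*a^2 + 8*b)" using t2(2) unfolding cb by algebra
  moreover have "3*a^2 + 8*b > 0" using assms by (intro add_pos_pos) auto
  ultimately have "- (6*cb + a*b) / (3*a^2 + 8*b) = t2" by (simp add: field_simps)
  then show ?thesis using t2 unfolding Let_def poly_pderiv_Pp poly_pderiv2_Pp cb by auto
qed

lemma theorem2_b:
  fixes a b d cminus cb :: real
  assumes "a > 0" "b > 0" "d > 0" "cb < 0" "Hf a b cb = 0"
  shows "cb \<ge> (b^2 - 12*d) / (3*a) \<longrightarrow>
    (\<forall>c. cminus < c \<and> c < - sqrt (3*b*d) \<longrightarrow> card (equilibria a b c d) = 1)"
proof (intro impI allI)
  fix c assume "cb \<ge> (b^2 - 12*d) / (3*a)"
  obtain t2 where t2: "t2 > 0" "12*t2^2 - 6*a*t2 - 2*b = 0"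
    using inflection_point_exists assms by blast
  have "tangency_poly a b d t2 \<ge> 0"
    using tangency_poly_at_inflection_nonneg_iff[OF assms(1) t2(2) inflection_value_eq_cb[OF assms(1,2,4,5) t2]]
      \<open>cb \<ge> _\<close> by simp
  then show "card (equilibria a b c d) = 1"
    using card_equilibria_eq_1 equilibrium_param_strict_mono_if_tangency_nonneg assms t2 by blast
qed

lemma theorem2_c:
  fixes a b d cminus cb :: real
  assumes a: "a > 0" and b: "b > 0" and d: "d > 0"
    and cminus: "cminus < 0" "Qf a b d cminus = 0"
    and cb: "cb < 0" "Hf a b cb = 0"
    and cb_small: "cb < (b^2 - 12*d) / (3*a)"
  shows "\<exists>cm cM tm tM.
       cb < cm \<and> cm < cM \<and> cM < - sqrt (3*b*d) \<and> cminus < cM \<and>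
       0 < tM \<and> tM < tm \<and>
       touches (Pp a b cm d) tm \<and> loc_min_pt (poly (Pp a b cm d)) tm \<and>
       (\<forall>t>0. touches (Pp a b cm d) t \<longrightarrow> t = tm) \<and>
       touches (Pp a b cM d) tM \<and> loc_max_pt (poly (Pp a b cM d)) tM \<and>
       (\<forall>t>0. touches (Pp a b cM d) t \<longrightarrow> t = tM) \<and>
       (\<forall>c t. cb < c \<and> c < cm \<and> t > 0 \<longrightarrow> \<not> touches (Pp a b c d) t) \<and>
       (\<forall>c t. cm < c \<and> c < cM \<and> t > 0 \<longrightarrow> \<not> touches (Pp a b c d) t) \<and>
       (cminus \<le> cm \<longrightarrow>
          (\<forall>c. cm < c \<and> c < cM \<longrightarrow> card (equilibria a b c d) = 3) \<and>
          card (equilibria a b cm d) = 2 \<and> tm \<in> equilibria a b cm d \<and>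
          (phi a b cm d has_real_derivative 1) (at tm) \<and>
          (\<forall>t\<in>equilibria a b cm d. t \<noteq> tm \<longrightarrow> t < tm) \<and>
          card (equilibria a b cM d) = 2 \<and> tM \<in> equilibria a b cM d \<and>
          (phi a b cM d has_real_derivative 1) (at tM) \<and>
          (\<forall>t\<in>equilibria a b cM d. t \<noteq> tM \<longrightarrow> tM < t) \<and>
          (\<forall>c. (cminus < c \<and> c < cm) \<or> (cM < c \<and> c < - sqrt (3*b*d)) \<longrightarrow>
               card (equilibria a b c d) = 1)) \<and>
       (cm < cminus \<longrightarrow>
          (\<forall>c. cminus < c \<and> c < cM \<longrightarrow> card (equilibria a b c d) = 3) \<and>
          card (equilibria a b cM d) = 2 \<and> tM \<in> equilibria a b cM d \<and>
          (phi a b cM d has_real_derivative 1) (at tM) \<and>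
          (\<forall>t\<in>equilibria a b cM d. t \<noteq> tM \<longrightarrow> tM < t) \<and>
          (\<forall>c. cM < c \<and> c < - sqrt (3*b*d) \<longrightarrow> card (equilibria a b c d) = 1))"
proof -
  obtain t2 where t2: "t2 > 0" "12*t2^2 - 6*a*t2 - 2*b = 0"
    using inflection_point_exists a b by blast
  have cb_t2: "cb = 4*t2^3 - 3*a*t2^2 - 2*b*t2" by (rule inflection_value_eq_cb[OF a b cb t2])
  have "tangency_poly a b d t2 < 0"
    using tangency_poly_at_inflection_nonneg_iff[OF a t2(2) cb_t2, of d] cb_small by linarith
  then obtain tM tm where tMm: "0 < tM" "tM < t2" "t2 < tm"
    and zeros: "tangency_poly a b d tM = 0" "tangency_poly a b d tm = 0"
    and signs: "\<And>t. 0 < t \<Longrightarrow> t < tM \<Longrightarrow> tangency_poly a b d t > 0"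
      "\<And>t. tM < t \<Longrightarrow> t < tm \<Longrightarrow> tangency_poly a b d t < 0"
      "\<And>t. tm < t \<Longrightarrow> tangency_poly a b d t > 0"
    using tangency_poly_two_zeros[OF a b d t2] by blast
  interpret two_tangencies a b d tM tm
    using tMm zeros signs a b d by unfold_locales auto
  have cb_cm: "cb < cm"
    using inflection_value_less[OF b t2 \<open>t2 < tm\<close>] equilibrium_param_at_tangency(1)[OF tm zeros(2)]
    unfolding cb_t2 by simp
  have cM_bound: "cM < - sqrt (3*b*d)" by (rule tangency_value_less_neg_sqrt[OF a b d tM zero_tM])
  have cminus_cM: "cminus < cM"
    using cminus_less_left_tangency_value[OF a b d cminus tM zero_tM]
      second_derivative_sign(1)[OF b t2 tM \<open>tM < t2\<close>] by simp
  show ?thesis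
    by (rule exI[of _ cm], rule exI[of _ cM], rule exI[of _ tm], rule exI[of _ tM])
      (use cb_cm cM_bound cminus_cM cm_less_cM tM tM_tm equilibria_at_cm equilibria_at_cM
        tangent_phi_has_derivative_1[OF tm touches_at_cm] tangent_phi_has_derivative_1[OF tM touches_at_cM]
       in \<open>auto simp: card_equilibria_1_below card_equilibria_1_above card_equilibria_3
         intro: touches_at_cm touches_at_cM loc_min_at_cm loc_max_at_cM dest: touches_only_at_tangencies\<close>)
qed

theorem theorem2:
  fixes a b d cminus cb :: real
  assumes ha: "a > 0" and hb: "b > 0" and hd: "d > 0"
    and hcm: "cminus < 0" "Qf a b d cminus = 0"
    and hcb: "cb < 0" "Hf a b cb = 0"
  shows
   \<comment> \<open>(a)\<close>
   "(\<forall>c. cminus < c \<and> c < - sqrt (3*b*d) \<and> c = cb \<longrightarrow>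
        (let ts = - (6*cb + a*b) / (3*a^2 + 8*b) in
          poly (pderiv (Pp a b c d)) ts = 0 \<and> poly (pderiv (pderiv (Pp a b c d))) ts = 0 \<and> ts > 0))
    \<and>
   \<comment> \<open>(b)\<close>
   (cb \<ge> (b^2 - 12*d) / (3*a) \<longrightarrow>
      (\<forall>c. cminus < c \<and> c < - sqrt (3*b*d) \<longrightarrow> card (equilibria a b c d) = 1))
    \<and>
   \<comment> \<open>(c)\<close>
   (cb < (b^2 - 12*d) / (3*a) \<longrightarrow>
      (\<exists>cm cM tm tM.
         cb < cm \<and> cm < cM \<and> cM < - sqrt (3*b*d) \<and> cminus < cM \<and>
         0 < tM \<and> tM < tm \<and>
         touches (Pp a b cm d) tm \<and> loc_min_pt (poly (Pp a b cm d)) tm \<and>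
         (\<forall>t>0. touches (Pp a b cm d) t \<longrightarrow> t = tm) \<and>
         touches (Pp a b cM d) tM \<and> loc_max_pt (poly (Pp a b cM d)) tM \<and>
         (\<forall>t>0. touches (Pp a b cM d) t \<longrightarrow> t = tM) \<and>
         (\<forall>c t. cb < c \<and> c < cm \<and> t > 0 \<longrightarrow> \<not> touches (Pp a b c d) t) \<and>
         (\<forall>c t. cm < c \<and> c < cM \<and> t > 0 \<longrightarrow> \<not> touches (Pp a b c d) t) \<and>
         \<comment> \<open>(c1)\<close>
         (cminus \<le> cm \<longrightarrow>
            (\<forall>c. cm < c \<and> c < cM \<longrightarrow> card (equilibria a b c d) = 3) \<and>
            card (equilibria a b cm d) = 2 \<and> tm \<in> equilibria a b cm d \<and>
            (phi a b cm d has_real_derivative 1) (at tm) \<and>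
            (\<forall>t\<in>equilibria a b cm d. t \<noteq> tm \<longrightarrow> t < tm) \<and>
            card (equilibria a b cM d) = 2 \<and> tM \<in> equilibria a b cM d \<and>
            (phi a b cM d has_real_derivative 1) (at tM) \<and>
            (\<forall>t\<in>equilibria a b cM d. t \<noteq> tM \<longrightarrow> tM < t) \<and>
            (\<forall>c. (cminus < c \<and> c < cm) \<or> (cM < c \<and> c < - sqrt (3*b*d)) \<longrightarrow>
                 card (equilibria a b c d) = 1)) \<and>
         \<comment> \<open>(c2)\<close>
         (cm < cminus \<longrightarrow>
            (\<forall>c. cminus < c \<and> c < cM \<longrightarrow> card (equilibria a b c d) = 3) \<and>
            card (equilibria a b cM d) = 2 \<and> tM \<in> equilibria a b cM d \<and>
            (phi a b cM d has_real_derivative 1) (at tM) \<and>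
            (\<forall>t\<in>equilibria a b cM d. t \<noteq> tM \<longrightarrow> tM < t) \<and>
            (\<forall>c. cM < c \<and> c < - sqrt (3*b*d) \<longrightarrow> card (equilibria a b c d) = 1))))"
  using theorem2_a[OF ha hb hcb] theorem2_b[OF ha hb hd hcb] theorem2_c[OF ha hb hd hcm hcb]
  by blast

end
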